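(* Let $A$ be a $d\times n$ matrix with non-negative integer entries such that each standard basis vector $\mathbf e_1,\dots,\mathbf e_d$ of $\mathbb Z^d$ appears as a column of $A$. Let $\mathbf c$ be a column of $A$ and $I=\{k: c_k>0,\ 1\le k\le d\}$. For $i\in I$, let $E^{(i)}$ be the matrix obtained from $A$ by replacing the column $\mathbf c$ with $\mathbf e_i$. Then $p_{E^{(i)}}(\mathbf b)\ge p_A(\mathbf b)$ for all $\mathbf b\in\mathbb Z^d_{\ge0}$.
   Context: For an integer matrix $M$ with $r$ columns and $\mathbf b$ a vector, $p_M(\mathbf b)=\#\{\mathbf x\in\mathbb Z^r_{\ge0}:M\mathbf x=\mathbf b\}$ (the vector partition function, counted as a cardinality). *)

theory Defs
  imports Main "HOL-Library.Extended_Nat"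
begin

text \<open>A d x n matrix with entries in nat is represented as a function
  M :: nat => nat => nat, where M i j is the entry in row i < d and column j < n.
  Vectors in Z^r_{>=0} are functions nat => nat supported on {..<r}.\<close>

definition vp_solutions :: "nat \<Rightarrow> nat \<Rightarrow> (nat \<Rightarrow> nat \<Rightarrow> nat) \<Rightarrow> (nat \<Rightarrow> nat) \<Rightarrow> (nat \<Rightarrow> nat) set" where
  "vp_solutions d n M b =
     {x. (\<forall>j. n \<le> j \<longrightarrow> x j = 0) \<and> (\<forall>i<d. (\<Sum>j<n. M i j * x j) = b i)}"

definition vpf :: "nat \<Rightarrow> nat \<Rightarrow> (nat \<Rightarrow> nat \<Rightarrow> nat) \<Rightarrow> (nat \<Rightarrow> nat) \<Rightarrow> enat" where
  "vpf d n M b = (if finite (vp_solutions d n M b) then enat (card (vp_solutions d n M b)) else \<infinity>)"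

definition is_std_basis_col :: "nat \<Rightarrow> (nat \<Rightarrow> nat \<Rightarrow> nat) \<Rightarrow> nat \<Rightarrow> nat \<Rightarrow> bool" where
  "is_std_basis_col d M j k = (\<forall>i<d. M i j = (if i = k then 1 else 0))"

definition replace_col :: "(nat \<Rightarrow> nat \<Rightarrow> nat) \<Rightarrow> nat \<Rightarrow> nat \<Rightarrow> (nat \<Rightarrow> nat \<Rightarrow> nat)" where
  "replace_col M j0 k = (\<lambda>i j. if j = j0 then (if i = k then 1 else 0) else M i j)"

end

theory Submission
  imports Defs
begin

text \<open>Let \<open>c\<close> be column \<open>j0\<close> of \<open>A\<close>. Since \<open>c\<^sub>i \<ge> 1\<close>, we have
  \<open>c = e\<^sub>i + (c\<^sub>i - 1) e\<^sub>i + (\<Sum>k \<noteq> i. c\<^sub>k e\<^sub>k)\<close>, and every vector on the right is a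
  column of \<open>E\<close>: \<open>e\<^sub>i\<close> is the new column \<open>j0\<close>, and for \<open>k \<noteq> i\<close> the basis column \<open>e\<^sub>k\<close>
  of \<open>A\<close> is not column \<open>j0\<close> because \<open>c\<^sub>i > 0\<close>. So \<open>c = e\<^sub>i + E w\<close> with \<open>w \<ge> 0\<close>, and
  \<open>x \<mapsto> x + x\<^sub>j\<^sub>0 w\<close> maps solutions of \<open>A x = b\<close> to solutions of \<open>E y = b\<close>. It is
  injective because the \<open>j0\<close>-coordinate of the image is \<open>(1 + w\<^sub>j\<^sub>0) x\<^sub>j\<^sub>0\<close>.\<close>

lemma vpf_le_vpf_if_inj:
  assumes "inj_on f (vp_solutions d n A b)"
    and "f ` vp_solutions d n A b \<subseteq> vp_solutions d' n' E b'"
  shows "vpf d n A b \<le> vpf d' n' E b'"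
proof (cases "finite (vp_solutions d' n' E b')")
  case True
  then have "finite (vp_solutions d n A b)"
    using assms finite_imageD finite_subset by metis
  moreover have "card (vp_solutions d n A b) \<le> card (vp_solutions d' n' E b')"
    using card_inj_on_le[OF assms True] .
  ultimately show ?thesis
    using True unfolding vpf_def by simp
qed (simp add: vpf_def)

lemma row_sum_shift_column:
  fixes A E :: "nat \<Rightarrow> nat \<Rightarrow> nat"
  assumes "j0 < n"
    and same_cols: "\<And>j. j \<noteq> j0 \<Longrightarrow> E r j = A r j"
    and col_j0: "A r j0 = E r j0 + (\<Sum>j<n. E r j * w j)"
  shows "(\<Sum>j<n. A r j * x j) = (\<Sum>j<n. E r j * (x j + x j0 * w j))"
proof -
  have others: "(\<Sum>j\<in>{..<n} - {j0}. A r j * x j) = (\<Sum>j\<in>{..<n} - {j0}. E r j * x j)"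
    using same_cols by (intro sum.cong) auto
  have "(\<Sum>j<n. A r j * x j) + E r j0 * x j0 = (\<Sum>j<n. E r j * x j) + A r j0 * x j0"
    using \<open>j0 < n\<close> others by (simp add: sum.remove)
  also have "\<dots> = (\<Sum>j<n. E r j * (x j + x j0 * w j)) + E r j0 * x j0"
    by (simp add: col_j0 algebra_simps sum.distrib sum_distrib_left)
  finally show ?thesis
    by simp
qed

lemma vpf_le_vpf_shift_column:
  fixes A E :: "nat \<Rightarrow> nat \<Rightarrow> nat" and w :: "nat \<Rightarrow> nat"
  assumes "j0 < n"
    and same_cols: "\<And>r j. j \<noteq> j0 \<Longrightarrow> E r j = A r j"
    and col_j0: "\<And>r. r < d \<Longrightarrow> A r j0 = E r j0 + (\<Sum>j<n. E r j * w j)"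
    and w_support: "\<And>j. n \<le> j \<Longrightarrow> w j = 0"
  shows "vpf d n A b \<le> vpf d n E b"
proof (rule vpf_le_vpf_if_inj)
  define f where "f x = (\<lambda>j. x j + x j0 * w j)" for x :: "nat \<Rightarrow> nat"
  show "f ` vp_solutions d n A b \<subseteq> vp_solutions d n E b"
  proof
    fix y
    assume "y \<in> f ` vp_solutions d n A b"
    then obtain x where x: "x \<in> vp_solutions d n A b" and y: "y = f x"
      by blast
    have "(\<Sum>j<n. E r j * y j) = b r" if "r < d" for r
      using row_sum_shift_column[where A = A and E = E and r = r and x = x,
          OF \<open>j0 < n\<close> same_cols col_j0[OF that]] x that
      by (simp add: y f_def vp_solutions_def)
    with x w_support show "y \<in> vp_solutions d n E b"
      by (simp add: y f_def vp_solutions_def)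
  qed
  show "inj_on f (vp_solutions d n A b)"
  proof (rule inj_onI)
    fix x y
    assume eq: "f x = f y"
    have "x j0 * (1 + w j0) = y j0 * (1 + w j0)"
      using fun_cong[OF eq, of j0] by (simp add: f_def algebra_simps)
    then have "x j0 = y j0"
      by (simp only: mult_cancel_right) simp
    with eq show "x = y"
      by (auto simp: f_def fun_eq_iff dest: fun_cong)
  qed
qed

lemma std_basis_cols_combination:
  assumes basis: "\<And>k. k < d \<Longrightarrow> J k < n \<and> is_std_basis_col d M (J k) k"
    and "r < d"
  shows "(\<Sum>j<n. M r j * (\<Sum>k<d. if J k = j then c k else 0)) = c r"
proof -
  have "(\<Sum>j<n. M r j * (\<Sum>k<d. if J k = j then c k else 0))
      = (\<Sum>k<d. \<Sum>j<n. M r j * (if J k = j then c k else 0))"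
    by (simp add: sum_distrib_left sum.swap[of _ "{..<n}"])
  also have "\<dots> = (\<Sum>k<d. M r (J k) * c k)"
    using basis by (intro sum.cong refl) (simp add: if_distrib[of "(*) (M r _)"] cong: if_cong)
  also have "\<dots> = (\<Sum>k<d. if r = k then c k else 0)"
    using basis \<open>r < d\<close> by (intro sum.cong) (auto simp: is_std_basis_col_def)
  also have "\<dots> = c r"
    using \<open>r < d\<close> by simp
  finally show ?thesis .
qed

lemma replace_col_std_basis_cols:
  assumes basis: "\<And>k. k < d \<Longrightarrow> J k < n \<and> is_std_basis_col d A (J k) k"
    and "j0 < n" "i < d" "A i j0 > 0" "k < d"
  shows "(J(i := j0)) k < n \<and> is_std_basis_col d (replace_col A j0 i) ((J(i := j0)) k) k"
proof (cases "k = i")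
  case False
  have "J k \<noteq> j0"
    using basis[OF \<open>k < d\<close>] False \<open>i < d\<close> \<open>A i j0 > 0\<close> by (auto simp: is_std_basis_col_def)
  with basis[OF \<open>k < d\<close>] False show ?thesis
    by (simp add: is_std_basis_col_def replace_col_def)
qed (simp add: \<open>j0 < n\<close> is_std_basis_col_def replace_col_def)

theorem mainTheorem17:
  fixes d n :: nat and A :: "nat \<Rightarrow> nat \<Rightarrow> nat" and j0 i :: nat and b :: "nat \<Rightarrow> nat"
  assumes basis: "\<forall>k<d. \<exists>j<n. is_std_basis_col d A j k"
    and j0: "j0 < n"
    and iI: "i \<in> {k. k < d \<and> A k j0 > 0}"
  shows "vpf d n (replace_col A j0 i) b \<ge> vpf d n A b"
proof -
  obtain J where J: "\<And>k. k < d \<Longrightarrow> J k < n \<and> is_std_basis_col d A (J k) k"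
    using basis by metis
  from iI have "i < d" "A i j0 > 0"
    by auto
  define E where "E = replace_col A j0 i"
  define coeff where "coeff = (\<lambda>k. A k j0)(i := A i j0 - 1)"
  define w where "w j = (\<Sum>k<d. if (J(i := j0)) k = j then coeff k else 0)" for j
  have E_basis: "\<And>k. k < d \<Longrightarrow> (J(i := j0)) k < n \<and> is_std_basis_col d E ((J(i := j0)) k) k"
    unfolding E_def using replace_col_std_basis_cols[OF J j0 \<open>i < d\<close> \<open>A i j0 > 0\<close>] .
  have "A r j0 = E r j0 + (\<Sum>j<n. E r j * w j)" if "r < d" for r
    using std_basis_cols_combination[OF E_basis that] \<open>A i j0 > 0\<close>
    by (simp add: w_def coeff_def E_def replace_col_def)
  moreover have "w j = 0" if "n \<le> j" for j
  proof -
    have "(J(i := j0)) k \<noteq> j" if "k < d" for k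
      using E_basis[OF that] \<open>n \<le> j\<close> by linarith
    then show ?thesis
      unfolding w_def by (intro sum.neutral) (simp del: fun_upd_apply)
  qed
  ultimately show ?thesis
    using vpf_le_vpf_shift_column[OF j0, of E A d w b] by (simp add: E_def replace_col_def)
qed

end
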